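(* Let $S=(S_n)_{n\in\mathbb N}$ be the simple random walk on $\mathbb Z^d$ started at $0$, on a probability space $(\Sigma,\mathcal E,\mathbf P)$. Let $\eta=(\eta(n,x))_{(n,x)\in\mathbb N\times\mathbb Z^d}$ be i.i.d. non-constant real random variables on a probability space $(\Omega,\mathcal F,\mathbb P)$. Let $\beta>0$, assume $\mathbb E e^{\beta|\eta(0,0)|}<\infty$, and let $\lambda(s)=\ln\mathbb E e^{s\eta(0,0)}$. Set $K=2\exp(\lambda(\beta)+\lambda(-\beta))$ and $H_n(S)=\sum_{j=1}^n\eta(j,S_j)$. Let $(f_n)_{n\ge1}$ be a sequence of bounded nonnegative functions on $\mathbb R^d$ such that $\mathbf P(f_n(S_n)>0)\neq0$ for all $n\ge1$, and set $Y_n=\mathbf E\big[f_n(S_n)e^{\beta H_n(S)}\big]$. Then for all $n\ge1$, for both signs $\pm$, $$\mathbb E e^{\pm t(\ln Y_n-\mathbb E\ln Y_n)}\le\exp(nKt^2)\quad\text{for all }t\in[0,1],$$ and $$\mathbb P\Big(\pm\tfrac1n(\ln Y_n-\mathbb E\ln Y_n)>x\Big)\le\begin{cases}\exp\big(-\frac{nx^2}{4K}\big) & \text{if } x\in(0,2K],\\ \exp(-n(x-K)) & \text{if } x\in(2K,\infty).\end{cases}$$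
   Context: $\mathbf E$ is expectation with respect to $\mathbf P$ (over the walk, environment fixed); $\mathbb E$ is expectation with respect to $\mathbb P$ (over the environment). *)

theory Defs
  imports "HOL-Probability.Probability"
begin

text \<open>Simple random walk on Z^d (d = CARD('d)), started at 0. Its law is the uniform
  distribution on nearest-neighbour step sequences, so the walk expectation of a path
  functional is the average over all (2d)^n step sequences of length n.\<close>

definition unit_steps :: "(int^'d::finite) set" where
  "unit_steps = {v. \<exists>i. v = axis i 1 \<or> v = axis i (-1)}"

definition walk_paths :: "nat \<Rightarrow> (int^'d::finite) list set" where
  "walk_paths n = {xs. length xs = n \<and> set xs \<subseteq> unit_steps}"

definition walk_pos :: "(int^'d::finite) list \<Rightarrow> nat \<Rightarrow> int^'d" where
  "walk_pos xs j = sum_list (take j xs)"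

definition walkE :: "nat \<Rightarrow> ((nat \<Rightarrow> int^'d::finite) \<Rightarrow> real) \<Rightarrow> real" where
  "walkE n F = (\<Sum>xs\<in>walk_paths n. F (walk_pos xs)) / real (card (walk_paths n :: (int^'d) list set))"

definition to_real_vec :: "int^'d::finite \<Rightarrow> real^'d" where
  "to_real_vec x = (\<chi> i. real_of_int (x $ i))"

definition partition_Y ::
  "real \<Rightarrow> ('w \<Rightarrow> nat \<times> (int^'d::finite) \<Rightarrow> real) \<Rightarrow> (nat \<Rightarrow> real^'d \<Rightarrow> real)
     \<Rightarrow> nat \<Rightarrow> 'w \<Rightarrow> real" where
  "partition_Y \<beta> \<eta> f n \<omega> =
     walkE n (\<lambda>S. f n (to_real_vec (S n)) * exp (\<beta> * (\<Sum>j=1..n. \<eta> \<omega> (j, S j))))"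

end

theory Submission
  imports Defs
begin

text \<open>\<open>ln Y\<^sub>n\<close> is \<open>ln\<close> of a weighted sum over walk paths of \<open>exp (\<beta> H\<^sub>n)\<close>, a function of the
  environment on finitely many space-time sites. Reveal the environment one time row at a time.
  When row \<open>m + 1\<close> is added, the increment \<open>D\<close> of the conditional mean of the log-partition
  function satisfies \<open>E e\<^sup>D + E e\<^sup>-\<^sup>D \<le> K\<close>: by Jensen it suffices to bound the effect of
  absorbing row \<open>m + 1\<close> into the path weights, whose exponential is a convex combination of the
  mean-one variables \<open>e\<^sup>\<beta>\<^sup>\<eta> / E e\<^sup>\<beta>\<^sup>\<eta>\<close>, and whose negative exponential is bounded by
  convexity of \<open>1/x\<close>. With \<open>e\<^sup>t\<^sup>u \<le> 1 + t u + t\<^sup>2 (e\<^sup>u + e\<^sup>-\<^sup>u)\<close> for \<open>t \<in> [0, 1]\<close>, each row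
  contributes a factor \<open>exp (K t\<^sup>2)\<close> to the moment generating function, and Chernoff's bound
  with \<open>t = x / (2 K)\<close>, or \<open>t = 1\<close>, gives the tails.\<close>

lemma exp_minus_linear_eq_suminf:
  "exp x - 1 - x = (\<Sum>n. inverse (fact (n + 2)) * x ^ (n + 2))" for x :: real
  using exp_first_two_terms[of x] by simp

lemma summable_exp_tail: "summable (\<lambda>n. inverse (fact (n + 2)) * (x::real) ^ (n + 2))"
  using summable_ignore_initial_segment[OF summable_exp[of x], of 2] by simp

lemma exp_minus_linear_le_abs: "exp x - 1 - x \<le> exp \<bar>x\<bar> - 1 - \<bar>x\<bar>" for x :: real
  unfolding exp_minus_linear_eq_suminf
proof (rule suminf_le[OF _ summable_exp_tail summable_exp_tail])
  fix n
  have "x ^ (n + 2) \<le> \<bar>x\<bar> ^ (n + 2)" by (metis abs_ge_self power_abs)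
  then show "inverse (fact (n + 2)) * x ^ (n + 2) \<le> inverse (fact (n + 2)) * \<bar>x\<bar> ^ (n + 2)"
    by (intro mult_left_mono) auto
qed

lemma exp_minus_linear_scale_le:
  fixes a t :: real
  assumes "0 \<le> t" "t \<le> 1" "0 \<le> a"
  shows "exp (t * a) - 1 - t * a \<le> t\<^sup>2 * (exp a - 1 - a)"
proof -
  have "(\<Sum>n. inverse (fact (n + 2)) * (t * a) ^ (n + 2))
      \<le> (\<Sum>n. t\<^sup>2 * (inverse (fact (n + 2)) * a ^ (n + 2)))"
  proof (rule suminf_le[OF _ summable_exp_tail summable_mult[OF summable_exp_tail]])
    fix n
    have "t ^ (n + 2) * a ^ (n + 2) \<le> t\<^sup>2 * a ^ (n + 2)"
      using assms by (intro mult_right_mono power_decreasing) auto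
    then have "inverse (fact (n + 2)) * (t ^ (n + 2) * a ^ (n + 2))
        \<le> inverse (fact (n + 2)) * (t\<^sup>2 * a ^ (n + 2))"
      by (intro mult_left_mono) auto
    then show "inverse (fact (n + 2)) * (t * a) ^ (n + 2) \<le> t\<^sup>2 * (inverse (fact (n + 2)) * a ^ (n + 2))"
      by (simp only: power_mult_distrib mult.left_commute)
  qed
  also have "\<dots> = t\<^sup>2 * (\<Sum>n. inverse (fact (n + 2)) * a ^ (n + 2))"
    by (rule suminf_mult[OF summable_exp_tail])
  finally show ?thesis unfolding exp_minus_linear_eq_suminf .
qed

lemma exp_le_quadratic_bound:
  fixes t u :: real
  assumes "0 \<le> t" "t \<le> 1"
  shows "exp (t * u) \<le> 1 + t * u + t\<^sup>2 * (exp u + exp (- u))"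
proof -
  have "exp (t * u) - 1 - t * u \<le> exp (t * \<bar>u\<bar>) - 1 - t * \<bar>u\<bar>"
    using exp_minus_linear_le_abs[of "t * u"] assms by (simp add: abs_mult)
  also have "\<dots> \<le> t\<^sup>2 * (exp \<bar>u\<bar> - 1 - \<bar>u\<bar>)"
    by (rule exp_minus_linear_scale_le) (use assms in auto)
  also have "\<dots> \<le> t\<^sup>2 * (exp u + exp (- u))"
    by (intro mult_left_mono) (auto simp: abs_if intro: order.trans[OF _ less_imp_le[OF exp_gt_zero]])
  finally show ?thesis by simp
qed

lemma exp_log_sum_ratio:
  fixes w u :: "'q \<Rightarrow> real"
  assumes "finite Q" "\<And>q. q \<in> Q \<Longrightarrow> 0 \<le> w q" "0 < sum w Q" "\<And>q. q \<in> Q \<Longrightarrow> 0 < u q"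
  shows "exp (ln (\<Sum>q\<in>Q. w q * u q) - ln (sum w Q)) = (\<Sum>q\<in>Q. w q / sum w Q * u q)"
    and "exp (- (ln (\<Sum>q\<in>Q. w q * u q) - ln (sum w Q))) \<le> (\<Sum>q\<in>Q. w q / sum w Q * inverse (u q))"
proof -
  define a where "a q = w q / sum w Q" for q
  have a_nonneg: "q \<in> Q \<Longrightarrow> 0 \<le> a q" for q
    using assms(2,3) by (simp add: a_def)
  have a_sum: "sum a Q = 1"
    using assms(3) by (simp add: a_def flip: sum_divide_distrib)
  have mean: "(\<Sum>q\<in>Q. w q * u q) = sum w Q * (\<Sum>q\<in>Q. a q * u q)"
    using assms(3) by (simp add: a_def sum_distrib_left)
  have mean_pos: "0 < (\<Sum>q\<in>Q. a q * u q)"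
  proof -
    obtain q0 where q0: "q0 \<in> Q" "0 < w q0"
      using assms(3) sum_nonpos[of Q w] by (meson not_less)
    have "0 < a q0 * u q0"
      using q0 assms(3,4) by (simp add: a_def)
    moreover have "\<And>q. q \<in> Q \<Longrightarrow> 0 \<le> a q * u q"
      using a_nonneg assms(4) by (simp add: less_imp_le)
    ultimately show ?thesis
      by (rule sum_pos2[OF assms(1) q0(1)])
  qed
  have log_ratio: "ln (\<Sum>q\<in>Q. w q * u q) - ln (sum w Q) = ln (\<Sum>q\<in>Q. a q * u q)"
    using assms(3) mean_pos by (simp add: mean ln_mult)
  show "exp (ln (\<Sum>q\<in>Q. w q * u q) - ln (sum w Q)) = (\<Sum>q\<in>Q. w q / sum w Q * u q)"
    using mean_pos by (simp add: log_ratio a_def)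
  have Q_ne: "Q \<noteq> {}"
    using a_sum by auto
  have convex_inverse: "convex_on {0<..} (inverse :: real \<Rightarrow> real)"
    by (rule convex_on_inverse) auto
  have "inverse (\<Sum>q\<in>Q. a q * u q) \<le> (\<Sum>q\<in>Q. a q * inverse (u q))"
    using convex_on_sum[OF assms(1) Q_ne convex_inverse a_sum a_nonneg, of u] assms(4) by simp
  then show "exp (- (ln (\<Sum>q\<in>Q. w q * u q) - ln (sum w Q))) \<le> (\<Sum>q\<in>Q. w q / sum w Q * inverse (u q))"
    using mean_pos by (simp add: log_ratio exp_minus a_def)
qed

lemma abs_ln_weighted_sum_exp_le:
  fixes c h :: "'q \<Rightarrow> real"
  assumes "finite Q" "\<And>q. q \<in> Q \<Longrightarrow> 0 \<le> c q" "0 < sum c Q" "\<And>q. q \<in> Q \<Longrightarrow> \<bar>h q\<bar> \<le> T"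
  shows "\<bar>ln (\<Sum>q\<in>Q. c q * exp (h q))\<bar> \<le> \<bar>ln (sum c Q)\<bar> + T"
proof -
  define X where "X = (\<Sum>q\<in>Q. c q * exp (h q))"
  have h_bounds: "- T \<le> h q" "h q \<le> T" if "q \<in> Q" for q
    using assms(4)[OF that] by arith+
  have "X \<le> (\<Sum>q\<in>Q. c q * exp T)"
    unfolding X_def using assms(2) h_bounds by (intro sum_mono mult_left_mono) auto
  then have upper: "X \<le> sum c Q * exp T"
    by (simp add: sum_distrib_right)
  have "(\<Sum>q\<in>Q. c q * exp (- T)) \<le> X"
    unfolding X_def using assms(2) h_bounds by (intro sum_mono mult_left_mono) auto
  then have lower: "sum c Q * exp (- T) \<le> X"
    by (simp add: sum_distrib_right)
  have X_pos: "0 < X"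
    using assms(3) lower by (meson exp_gt_zero mult_pos_pos less_le_trans)
  have "ln X \<le> ln (sum c Q * exp T)"
    using upper X_pos by simp
  also have "\<dots> = ln (sum c Q) + T"
    using assms(3) by (simp add: ln_mult)
  finally have "ln X \<le> ln (sum c Q) + T" .
  moreover have "ln (sum c Q) - T = ln (sum c Q * exp (- T))"
    using assms(3) by (simp add: ln_mult)
  moreover have "ln (sum c Q * exp (- T)) \<le> ln X"
    using lower assms(3) X_pos by (subst ln_le_cancel_iff) auto
  ultimately show ?thesis
    unfolding X_def by linarith
qed

context prob_space
begin

lemma exp_integral_le_nn_integral_exp:
  assumes "integrable M g"
  shows "ennreal (exp (expectation g)) \<le> (\<integral>\<^sup>+x. exp (g x) \<partial>M)"
proof (cases "(\<integral>\<^sup>+x. exp (g x) \<partial>M) = \<infinity>")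
  case False
  have exp_g: "integrable M (\<lambda>x. exp (g x))"
    using False assms by (intro integrableI_bounded) (auto simp: top.not_eq_extremum)
  define c where "c = expectation g"
  have "exp c = expectation (\<lambda>x. exp c * (1 + (g x - c)))"
    using assms by (simp add: c_def prob_space)
  also have "\<dots> \<le> expectation (\<lambda>x. exp (g x))"
  proof (rule integral_mono[OF _ exp_g])
    show "integrable M (\<lambda>x. exp c * (1 + (g x - c)))"
      using assms by auto
    fix x
    have "exp c * (1 + (g x - c)) \<le> exp c * exp (g x - c)"
      by (intro mult_left_mono exp_ge_add_one_self) auto
    then show "exp c * (1 + (g x - c)) \<le> exp (g x)"
      by (simp add: exp_diff)
  qed
  finally show ?thesis
    using nn_integral_eq_integral[OF exp_g] by (simp add: c_def)
qed simp

lemma nn_integral_exp_le_of_two_sided_bound: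
  assumes D: "integrable M D" and centred: "expectation D = 0"
    and two_sided: "(\<integral>\<^sup>+x. exp (D x) \<partial>M) + (\<integral>\<^sup>+x. exp (- D x) \<partial>M) \<le> ennreal K"
    and "0 \<le> K" "0 \<le> t" "t \<le> 1"
  shows "(\<integral>\<^sup>+x. exp (t * D x) \<partial>M) \<le> ennreal (exp (K * t\<^sup>2))"
proof -
  have "(\<integral>\<^sup>+x. exp (D x) \<partial>M) \<le> ennreal K" "(\<integral>\<^sup>+x. exp (- D x) \<partial>M) \<le> ennreal K"
    using two_sided by (auto intro: order.trans[rotated] add_increasing add_increasing2)
  then have finite_plus: "(\<integral>\<^sup>+x. exp (D x) \<partial>M) < \<infinity>" and finite_minus: "(\<integral>\<^sup>+x. exp (- D x) \<partial>M) < \<infinity>"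
    by (auto simp: le_less_trans)
  have int_plus: "integrable M (\<lambda>x. exp (D x))" and int_minus: "integrable M (\<lambda>x. exp (- D x))"
    using finite_plus finite_minus D by (auto intro!: integrableI_bounded)
  have "0 \<le> expectation (\<lambda>x. exp (D x))" "0 \<le> expectation (\<lambda>x. exp (- D x))"
    by (auto intro!: integral_nonneg_AE)
  then have "ennreal (expectation (\<lambda>x. exp (D x)) + expectation (\<lambda>x. exp (- D x))) \<le> ennreal K"
    using two_sided nn_integral_eq_integral[OF int_plus] nn_integral_eq_integral[OF int_minus]
    by (subst ennreal_plus) auto
  then have sum_le: "expectation (\<lambda>x. exp (D x)) + expectation (\<lambda>x. exp (- D x)) \<le> K"
    using \<open>0 \<le> K\<close> by (simp only: ennreal_le_iff)
  define h where "h x = 1 + t * D x + t\<^sup>2 * (exp (D x) + exp (- D x))" for x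
  have h_int: "integrable M h"
    unfolding h_def using D int_plus int_minus by auto
  have exp_le_h: "exp (t * D x) \<le> h x" for x
    unfolding h_def by (rule exp_le_quadratic_bound) (use \<open>0 \<le> t\<close> \<open>t \<le> 1\<close> in auto)
  have "(\<integral>\<^sup>+x. exp (t * D x) \<partial>M) \<le> (\<integral>\<^sup>+x. h x \<partial>M)"
    by (intro nn_integral_mono ennreal_leI exp_le_h)
  also have "\<dots> = ennreal (expectation h)"
    using exp_le_h by (intro nn_integral_eq_integral[OF h_int] AE_I2) (auto intro: order.trans[OF less_imp_le[OF exp_gt_zero]])
  also have "expectation h = 1 + t\<^sup>2 * (expectation (\<lambda>x. exp (D x)) + expectation (\<lambda>x. exp (- D x)))"
    unfolding h_def using D int_plus int_minus centred by (simp add: prob_space)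
  also have "\<dots> \<le> 1 + K * t\<^sup>2"
    using mult_left_mono[OF sum_le, of "t\<^sup>2"] by (simp add: mult.commute)
  also have "\<dots> \<le> exp (K * t\<^sup>2)"
    using exp_ge_add_one_self[of "K * t\<^sup>2"] by linarith
  finally show ?thesis
    by (simp add: ennreal_leI)
qed

lemma prob_gt_le_of_mgf_bound:
  assumes F: "F \<in> borel_measurable M" and "0 < n" "0 < t"
    and mgf_int: "integrable M (\<lambda>\<omega>. exp (t * F \<omega>))"
    and mgf_le: "expectation (\<lambda>\<omega>. exp (t * F \<omega>)) \<le> exp (n * K * t\<^sup>2)"
  shows "prob {\<omega> \<in> space M. (1 / n) * F \<omega> > x} \<le> exp (n * K * t\<^sup>2 - t * n * x)"
proof -
  define A where "A = {\<omega> \<in> space M. (1 / n) * F \<omega> > x}"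
  have A: "A \<in> events"
    unfolding A_def using F by measurable
  have indicator_le: "indicator A \<omega> \<le> exp (t * F \<omega>) * exp (- (t * n * x))" for \<omega>
  proof (cases "\<omega> \<in> A")
    case True
    then have "n * x < F \<omega>"
      using \<open>0 < n\<close> by (simp add: A_def field_simps)
    then have "t * (n * x) \<le> t * F \<omega>"
      using \<open>0 < t\<close> by (intro mult_left_mono) auto
    then show ?thesis
      using True by (simp add: exp_minus_inverse mult_ac flip: exp_add)
  qed simp
  have "prob A = expectation (indicator A)"
    using A by simp
  also have "\<dots> \<le> expectation (\<lambda>\<omega>. exp (t * F \<omega>) * exp (- (t * n * x)))"
    using A mgf_int indicator_le by (intro integral_mono) (auto simp: emeasure_eq_measure)
  also have "\<dots> = expectation (\<lambda>\<omega>. exp (t * F \<omega>)) * exp (- (t * n * x))"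
    by simp
  also have "\<dots> \<le> exp (n * K * t\<^sup>2) * exp (- (t * n * x))"
    using mgf_le by (intro mult_right_mono) auto
  finally show ?thesis
    unfolding A_def by (simp add: exp_diff exp_minus divide_inverse)
qed

text \<open>Chernoff's bound, optimised over \<open>t \<in> (0, 1]\<close>: the optimum \<open>t = x / (2 K)\<close> is admissible
  exactly when \<open>x \<le> 2 K\<close>; otherwise \<open>t = 1\<close> is used.\<close>

lemma prob_gt_le_of_subgaussian_mgf:
  assumes F: "F \<in> borel_measurable M" and "0 < n" "0 < K" "0 < x"
    and mgf_int: "\<And>t. 0 \<le> t \<Longrightarrow> t \<le> 1 \<Longrightarrow> integrable M (\<lambda>\<omega>. exp (t * F \<omega>))"
    and mgf_le: "\<And>t. 0 \<le> t \<Longrightarrow> t \<le> 1 \<Longrightarrow> expectation (\<lambda>\<omega>. exp (t * F \<omega>)) \<le> exp (n * K * t\<^sup>2)"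
  shows "prob {\<omega> \<in> space M. (1 / n) * F \<omega> > x}
     \<le> (if x \<le> 2 * K then exp (- (n * x\<^sup>2) / (4 * K)) else exp (- n * (x - K)))"
proof (cases "x \<le> 2 * K")
  case True
  define t where "t = x / (2 * K)"
  have t: "0 < t" "t \<le> 1"
    using True \<open>0 < x\<close> \<open>0 < K\<close> by (auto simp: t_def)
  have "prob {\<omega> \<in> space M. (1 / n) * F \<omega> > x} \<le> exp (n * K * t\<^sup>2 - t * n * x)"
    using t by (intro prob_gt_le_of_mgf_bound[OF F \<open>0 < n\<close>] mgf_int mgf_le) auto
  also have "n * K * t\<^sup>2 - t * n * x = - (n * x\<^sup>2) / (4 * K)"
    using \<open>0 < K\<close> by (simp add: t_def field_simps power2_eq_square)
  finally show ?thesis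
    using True by simp
next
  case False
  have "prob {\<omega> \<in> space M. (1 / n) * F \<omega> > x} \<le> exp (n * K * 1\<^sup>2 - 1 * n * x)"
    by (intro prob_gt_le_of_mgf_bound[OF F \<open>0 < n\<close>] mgf_int mgf_le) auto
  also have "n * K * 1\<^sup>2 - 1 * n * x = - n * (x - K)"
    by (simp add: algebra_simps)
  finally show ?thesis
    using False by simp
qed

end

text \<open>Jensen's inequality in \<open>E\<close> and Tonelli bound the exponential moments of the \<open>E\<close>-average \<open>B\<close>
  of \<open>Z\<close> by those of \<open>Z\<close> integrated first over \<open>R\<close>; Jensen in \<open>R\<close> then controls the centring
  constant \<open>exp (\<plusminus> \<integral>B)\<close> by the same bounds.\<close>

lemma nn_integral_exp_centred_average_le:
  fixes Z :: "'r \<Rightarrow> 'e \<Rightarrow> real"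
  assumes "prob_space R" "prob_space E"
    and Z: "(\<lambda>(y, x). Z y x) \<in> borel_measurable (R \<Otimes>\<^sub>M E)"
    and Z_int: "\<And>y. integrable E (Z y)"
    and B_int: "integrable R (\<lambda>y. \<integral>x. Z y x \<partial>E)"
    and up: "\<And>x. (\<integral>\<^sup>+y. exp (Z y x) \<partial>R) \<le> ennreal a"
    and down: "\<And>x. (\<integral>\<^sup>+y. exp (- Z y x) \<partial>R) \<le> ennreal b"
    and "0 \<le> a" "0 \<le> b"
  defines "B \<equiv> \<lambda>y. \<integral>x. Z y x \<partial>E"
  shows "(\<integral>\<^sup>+y. exp (B y - (\<integral>y'. B y' \<partial>R)) \<partial>R) + (\<integral>\<^sup>+y. exp (- (B y - (\<integral>y'. B y' \<partial>R))) \<partial>R)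
     \<le> ennreal (2 * a * b)"
proof -
  interpret R: prob_space R by fact
  interpret E: prob_space E by fact
  interpret RE: pair_sigma_finite R E ..
  note Z[measurable]
  have B_meas[measurable]: "B \<in> borel_measurable R"
    using B_int by (simp add: B_def)
  have exp_average_le: "(\<integral>\<^sup>+y. exp (s * B y) \<partial>R) \<le> ennreal c"
    if "s \<in> {1, -1}" and bound: "\<And>x. (\<integral>\<^sup>+y. exp (s * Z y x) \<partial>R) \<le> ennreal c" for s c
  proof -
    have "(\<integral>\<^sup>+y. exp (s * B y) \<partial>R) \<le> (\<integral>\<^sup>+y. (\<integral>\<^sup>+x. exp (s * Z y x) \<partial>E) \<partial>R)"
      using E.exp_integral_le_nn_integral_exp[of "\<lambda>x. s * Z _ x"] Z_int
      by (intro nn_integral_mono) (simp add: B_def)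
    also have "\<dots> = (\<integral>\<^sup>+x. (\<integral>\<^sup>+y. exp (s * Z y x) \<partial>R) \<partial>E)"
      using RE.Fubini'[of "\<lambda>y x. exp (s * Z y x)"] by simp
    also have "\<dots> \<le> (\<integral>\<^sup>+x. ennreal c \<partial>E)"
      by (intro nn_integral_mono bound)
    finally show ?thesis
      by (simp add: E.emeasure_space_1)
  qed
  have plus: "(\<integral>\<^sup>+y. exp (B y) \<partial>R) \<le> ennreal a"
    using exp_average_le[of 1 a] up by simp
  have minus: "(\<integral>\<^sup>+y. exp (- B y) \<partial>R) \<le> ennreal b"
    using exp_average_le[of "-1" b] down by simp
  have centre_plus: "ennreal (exp (\<integral>y'. B y' \<partial>R)) \<le> ennreal a"
    using R.exp_integral_le_nn_integral_exp[of B] B_int plus by (simp add: B_def)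
  have centre_minus: "ennreal (exp (- (\<integral>y'. B y' \<partial>R))) \<le> ennreal b"
    using R.exp_integral_le_nn_integral_exp[of "\<lambda>y. - B y"] B_int minus by (simp add: B_def)
  have "(\<integral>\<^sup>+y. exp (B y - (\<integral>y'. B y' \<partial>R)) \<partial>R)
      = (\<integral>\<^sup>+y. exp (B y) \<partial>R) * ennreal (exp (- (\<integral>y'. B y' \<partial>R)))"
    by (simp add: exp_diff exp_minus divide_inverse ennreal_mult nn_integral_multc)
  also have "\<dots> \<le> ennreal (a * b)"
    using mult_mono[OF plus centre_minus] \<open>0 \<le> a\<close> \<open>0 \<le> b\<close> by (simp add: ennreal_mult)
  finally have plus_dev: "(\<integral>\<^sup>+y. exp (B y - (\<integral>y'. B y' \<partial>R)) \<partial>R) \<le> ennreal (a * b)" .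
  have "(\<integral>\<^sup>+y. exp (- (B y - (\<integral>y'. B y' \<partial>R))) \<partial>R)
      = (\<integral>\<^sup>+y. ennreal (exp (- B y)) * ennreal (exp (\<integral>y'. B y' \<partial>R)) \<partial>R)"
    by (intro nn_integral_cong) (simp add: ennreal_mult[symmetric] exp_add[symmetric])
  also have "\<dots> = (\<integral>\<^sup>+y. exp (- B y) \<partial>R) * ennreal (exp (\<integral>y'. B y' \<partial>R))"
    by (rule nn_integral_multc) measurable
  also have "\<dots> \<le> ennreal (a * b)"
    using mult_mono[OF minus centre_plus] \<open>0 \<le> a\<close> \<open>0 \<le> b\<close> by (simp add: ennreal_mult mult.commute)
  finally have minus_dev: "(\<integral>\<^sup>+y. exp (- (B y - (\<integral>y'. B y' \<partial>R))) \<partial>R) \<le> ennreal (a * b)" .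
  have "ennreal (a * b) + ennreal (a * b) = ennreal (2 * a * b)"
    using \<open>0 \<le> a\<close> \<open>0 \<le> b\<close> by (simp flip: ennreal_plus)
  then show ?thesis
    using add_mono[OF plus_dev minus_dev] by simp
qed

definition path_energy :: "('q \<Rightarrow> nat \<Rightarrow> 's) \<Rightarrow> nat \<Rightarrow> 'q \<Rightarrow> (nat \<times> 's \<Rightarrow> real) \<Rightarrow> real" where
  "path_energy \<pi> m q e = (\<Sum>j=1..m. e (j, \<pi> q j))"

definition log_partition ::
  "real \<Rightarrow> 'q set \<Rightarrow> ('q \<Rightarrow> real) \<Rightarrow> ('q \<Rightarrow> nat \<Rightarrow> 's) \<Rightarrow> nat \<Rightarrow> (nat \<times> 's \<Rightarrow> real) \<Rightarrow> real" where
  "log_partition \<beta> Q c \<pi> m e = ln (\<Sum>q\<in>Q. c q * exp (\<beta> * path_energy \<pi> m q e))"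

definition admissible :: "'q set \<Rightarrow> ('q \<Rightarrow> real) \<Rightarrow> ('q \<Rightarrow> nat \<Rightarrow> 's) \<Rightarrow> nat \<Rightarrow> 's set \<Rightarrow> bool" where
  "admissible Q c \<pi> m S \<longleftrightarrow> finite Q \<and> finite S \<and> (\<forall>q\<in>Q. 0 \<le> c q) \<and> (\<exists>q\<in>Q. 0 < c q)
     \<and> (\<forall>q\<in>Q. \<forall>j\<in>{1..m}. \<pi> q j \<in> S)"

definition last_row_weights ::
  "real \<Rightarrow> ('q \<Rightarrow> real) \<Rightarrow> ('q \<Rightarrow> nat \<Rightarrow> 's) \<Rightarrow> nat \<Rightarrow> (nat \<times> 's \<Rightarrow> real) \<Rightarrow> 'q \<Rightarrow> real" where
  "last_row_weights \<beta> c \<pi> m y q = c q * exp (\<beta> * y (Suc m, \<pi> q (Suc m)))"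

lemma admissible_weight_sum_pos: "admissible Q c \<pi> m S \<Longrightarrow> 0 < sum c Q"
  unfolding admissible_def by (metis sum_pos2)

lemma admissible_SucD: "admissible Q c \<pi> (Suc m) S \<Longrightarrow> admissible Q c \<pi> m S"
  unfolding admissible_def by auto

lemma admissible_last_row_weights:
  "admissible Q c \<pi> (Suc m) S \<Longrightarrow> admissible Q (last_row_weights \<beta> c \<pi> m y) \<pi> m S"
  unfolding admissible_def last_row_weights_def by (auto, metis exp_gt_zero mult_pos_pos)

lemma abs_log_partition_le:
  assumes "admissible Q c \<pi> m S" "0 \<le> \<beta>"
  shows "\<bar>log_partition \<beta> Q c \<pi> m e\<bar> \<le> \<bar>ln (sum c Q)\<bar> + \<beta> * (\<Sum>q\<in>Q. \<bar>path_energy \<pi> m q e\<bar>)"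
  unfolding log_partition_def
proof (rule abs_ln_weighted_sum_exp_le[OF _ _ admissible_weight_sum_pos[OF assms(1)]])
  fix q assume "q \<in> Q"
  then have "\<bar>path_energy \<pi> m q e\<bar> \<le> (\<Sum>q\<in>Q. \<bar>path_energy \<pi> m q e\<bar>)"
    using assms(1) by (intro member_le_sum) (auto simp: admissible_def)
  then show "\<bar>\<beta> * path_energy \<pi> m q e\<bar> \<le> \<beta> * (\<Sum>q\<in>Q. \<bar>path_energy \<pi> m q e\<bar>)"
    using assms(2) by (simp add: abs_mult mult_left_mono)
qed (use assms(1) in \<open>auto simp: admissible_def\<close>)

lemma log_partition_merge:
  assumes "admissible Q c \<pi> (Suc m) S"
  shows "log_partition \<beta> Q c \<pi> (Suc m) (merge ({Suc m} \<times> S) ({1..m} \<times> S) (y, x))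
       = log_partition \<beta> Q (last_row_weights \<beta> c \<pi> m y) \<pi> m x"
  unfolding log_partition_def
proof (intro arg_cong[where f = ln] sum.cong refl)
  fix q assume "q \<in> Q"
  then have path: "\<pi> q j \<in> S" if "j \<in> {1..Suc m}" for j
    using assms that by (auto simp: admissible_def)
  have "path_energy \<pi> (Suc m) q (merge ({Suc m} \<times> S) ({1..m} \<times> S) (y, x))
      = path_energy \<pi> m q x + y (Suc m, \<pi> q (Suc m))"
    unfolding path_energy_def using path by (auto simp: merge_def intro!: sum.cong)
  then show "c q * exp (\<beta> * path_energy \<pi> (Suc m) q (merge ({Suc m} \<times> S) ({1..m} \<times> S) (y, x)))
      = last_row_weights \<beta> c \<pi> m y q * exp (\<beta> * path_energy \<pi> m q x)"
    by (simp add: last_row_weights_def distrib_left exp_add mult_ac)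
qed

lemma exp_last_row_log_ratio:
  fixes \<beta> L :: real and x y :: "nat \<times> 's \<Rightarrow> real" and \<pi> :: "'q \<Rightarrow> nat \<Rightarrow> 's"
  assumes adm: "admissible Q c \<pi> (Suc m) S" and "0 < L"
  defines "w \<equiv> \<lambda>q. c q * exp (\<beta> * path_energy \<pi> m q x)"
  shows "q \<in> Q \<Longrightarrow> 0 \<le> w q / sum w Q"
    and "(\<Sum>q\<in>Q. w q / sum w Q) = 1"
    and "exp (log_partition \<beta> Q (last_row_weights \<beta> c \<pi> m y) \<pi> m x - log_partition \<beta> Q c \<pi> m x - ln L)
        = (\<Sum>q\<in>Q. w q / sum w Q * (exp (\<beta> * y (Suc m, \<pi> q (Suc m))) / L))"
    and "exp (- (log_partition \<beta> Q (last_row_weights \<beta> c \<pi> m y) \<pi> m x - log_partition \<beta> Q c \<pi> m x - ln L))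
        \<le> (\<Sum>q\<in>Q. w q / sum w Q * (L * exp (- \<beta> * y (Suc m, \<pi> q (Suc m)))))"
proof -
  from adm have Q: "finite Q" and c_nonneg: "\<And>q. q \<in> Q \<Longrightarrow> 0 \<le> c q"
    by (auto simp: admissible_def)
  define u where "u q = exp (\<beta> * y (Suc m, \<pi> q (Suc m)))" for q
  have w_nonneg: "q \<in> Q \<Longrightarrow> 0 \<le> w q" for q
    using c_nonneg by (simp add: w_def)
  have w_sum_pos: "0 < sum w Q"
  proof -
    obtain q0 where "q0 \<in> Q" "0 < c q0"
      using adm by (auto simp: admissible_def)
    then show ?thesis
      using sum_pos2[OF Q, of q0 w] w_nonneg by (simp add: w_def)
  qed
  show "q \<in> Q \<Longrightarrow> 0 \<le> w q / sum w Q"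
    using w_nonneg w_sum_pos by simp
  show "(\<Sum>q\<in>Q. w q / sum w Q) = 1"
    using w_sum_pos by (simp flip: sum_divide_distrib)
  have ratio: "log_partition \<beta> Q (last_row_weights \<beta> c \<pi> m y) \<pi> m x - log_partition \<beta> Q c \<pi> m x - ln L
      = (ln (\<Sum>q\<in>Q. w q * u q) - ln (sum w Q)) - ln L"
    unfolding log_partition_def last_row_weights_def w_def u_def by (simp add: mult_ac)
  show "exp (log_partition \<beta> Q (last_row_weights \<beta> c \<pi> m y) \<pi> m x - log_partition \<beta> Q c \<pi> m x - ln L)
      = (\<Sum>q\<in>Q. w q / sum w Q * (exp (\<beta> * y (Suc m, \<pi> q (Suc m))) / L))"
    using exp_log_sum_ratio(1)[OF Q w_nonneg w_sum_pos, of u] \<open>0 < L\<close>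
    by (simp add: ratio exp_diff u_def sum_divide_distrib)
  have "exp (- (ln (\<Sum>q\<in>Q. w q * u q) - ln (sum w Q) - ln L))
      = exp (- (ln (\<Sum>q\<in>Q. w q * u q) - ln (sum w Q)) + ln L)"
    by simp
  also have "\<dots> = exp (- (ln (\<Sum>q\<in>Q. w q * u q) - ln (sum w Q))) * L"
    using \<open>0 < L\<close> by (simp only: exp_add exp_ln)
  also have "\<dots> \<le> (\<Sum>q\<in>Q. w q / sum w Q * inverse (u q)) * L"
    using exp_log_sum_ratio(2)[OF Q w_nonneg w_sum_pos, of u] \<open>0 < L\<close>
    by (intro mult_right_mono) (auto simp: u_def)
  also have "\<dots> = (\<Sum>q\<in>Q. w q / sum w Q * (L * exp (- \<beta> * y (Suc m, \<pi> q (Suc m)))))"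
    by (simp add: u_def sum_distrib_left exp_minus mult_ac)
  finally show "exp (- (log_partition \<beta> Q (last_row_weights \<beta> c \<pi> m y) \<pi> m x - log_partition \<beta> Q c \<pi> m x - ln L))
      \<le> (\<Sum>q\<in>Q. w q / sum w Q * (L * exp (- \<beta> * y (Suc m, \<pi> q (Suc m)))))"
    unfolding ratio .
qed

lemma rows_Suc_Un: "{Suc m} \<times> S \<union> {1..m} \<times> S = {1..Suc m} \<times> S"
  by auto

lemma rows_Suc_Int: "{Suc m} \<times> S \<inter> {1..m} \<times> S = {}"
  by auto

lemma (in prob_space) distr_restrict_iid:
  assumes "I \<noteq> {}" and indep: "indep_vars (\<lambda>_. borel) X I"
    and law: "\<And>i. i \<in> I \<Longrightarrow> distr M borel (X i) = N" and sets_N: "sets N = sets borel"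
  shows "distr M (PiM I (\<lambda>_. N)) (\<lambda>\<omega>. \<lambda>i\<in>I. X i \<omega>) = PiM I (\<lambda>_. N)"
proof -
  have rv: "i \<in> I \<Longrightarrow> random_variable borel (X i)" for i
    using indep by (simp add: indep_vars_def)
  have "distr M (PiM I (\<lambda>_. borel)) (\<lambda>\<omega>. \<lambda>i\<in>I. X i \<omega>) = PiM I (\<lambda>i. distr M borel (X i))"
    using indep_vars_iff_distr_eq_PiM'[OF assms(1) rv] indep by simp
  also have "\<dots> = PiM I (\<lambda>_. N)"
    by (rule PiM_cong) (simp_all add: law)
  finally show ?thesis
    by (subst distr_cong[OF refl sets_PiM_cong[OF refl sets_N] refl]) simp_all
qed

text \<open>\<open>\<mu>\<close> is the law of a single site of the environment. In the notation of the theorem,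
  \<open>mgf s = exp \<lambda>(s)\<close>, so that \<open>K = 2 * mgf \<beta> * mgf (- \<beta>)\<close>.\<close>

locale exp_moment_law = prob_space \<mu> for \<mu> :: "real measure" +
  fixes \<beta> :: real
  assumes sets_law: "sets \<mu> = sets borel"
    and beta_pos: "0 < \<beta>"
    and integrable_exp_abs: "integrable \<mu> (\<lambda>v. exp (\<beta> * \<bar>v\<bar>))"
begin

definition mgf :: "real \<Rightarrow> real" where
  "mgf s = (\<integral>v. exp (s * v) \<partial>\<mu>)"

abbreviation env :: "'i set \<Rightarrow> ('i \<Rightarrow> real) measure" where
  "env I \<equiv> PiM I (\<lambda>_. \<mu>)"

lemma borel_measurable_law: "h \<in> borel_measurable borel \<Longrightarrow> h \<in> borel_measurable \<mu>"
  using measurable_cong_sets[OF sets_law refl] by blast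

lemma integrable_exp_mult:
  assumes "\<bar>s\<bar> \<le> \<beta>"
  shows "integrable \<mu> (\<lambda>v. exp (s * v))"
proof (rule Bochner_Integration.integrable_bound[OF integrable_exp_abs])
  have "s * v \<le> \<beta> * \<bar>v\<bar>" for v
  proof -
    have "s * v \<le> \<bar>s\<bar> * \<bar>v\<bar>"
      by (metis abs_ge_self abs_mult)
    then show ?thesis
      using mult_right_mono[OF assms abs_ge_zero[of v]] by linarith
  qed
  then show "AE v in \<mu>. norm (exp (s * v)) \<le> norm (exp (\<beta> * \<bar>v\<bar>))"
    by (intro AE_I2) simp
qed (auto intro: borel_measurable_law)

lemma mgf_pos: "\<bar>s\<bar> \<le> \<beta> \<Longrightarrow> 0 < mgf s"
  unfolding mgf_def by (intro expectation_greater integrable_exp_mult) auto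

lemma integrable_identity: "integrable \<mu> (\<lambda>v. v)"
proof (rule Bochner_Integration.integrable_bound)
  show "integrable \<mu> (\<lambda>v. exp (\<beta> * \<bar>v\<bar>) / \<beta>)"
    using integrable_exp_abs by auto
  show "AE v in \<mu>. norm v \<le> norm (exp (\<beta> * \<bar>v\<bar>) / \<beta>)"
  proof (intro AE_I2)
    fix v :: real
    have "\<beta> * \<bar>v\<bar> \<le> exp (\<beta> * \<bar>v\<bar>)"
      using exp_ge_add_one_self[of "\<beta> * \<bar>v\<bar>"] by linarith
    then show "norm v \<le> norm (exp (\<beta> * \<bar>v\<bar>) / \<beta>)"
      using beta_pos by (simp add: field_simps)
  qed
qed (auto intro: borel_measurable_law)

lemma prob_space_env: "prob_space (env I)"
  by (intro prob_space_PiM prob_space_axioms)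

lemma finite_measure_env: "finite_measure (env I)"
  using prob_space_env[of I] by (simp add: prob_space_def)

lemma measure_env_space [simp]: "measure (env I) (space (env I)) = 1"
  using prob_space.prob_space[OF prob_space_env[of I]] .

lemma measurable_env_coord: "i \<in> I \<Longrightarrow> (\<lambda>e. e i) \<in> borel_measurable (env I)"
  using measurable_component_singleton[of i I "\<lambda>_. \<mu>"] measurable_cong_sets[OF refl sets_law] by blast

lemma distr_env_coord: "i \<in> I \<Longrightarrow> distr (env I) \<mu> (\<lambda>e. e i) = \<mu>"
  by (rule distr_PiM_component) (auto intro: prob_space_axioms)

lemma nn_integral_env_coord:
  assumes "i \<in> I" "g \<in> borel_measurable borel"
  shows "(\<integral>\<^sup>+e. g (e i) \<partial>env I) = (\<integral>\<^sup>+v. g v \<partial>\<mu>)"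
  using nn_integral_distr[of "\<lambda>e. e i" "env I" \<mu> g] distr_env_coord[OF assms(1)] assms
  by (simp add: borel_measurable_law measurable_component_singleton)

lemma integrable_env_coord:
  fixes g :: "real \<Rightarrow> real"
  assumes "i \<in> I" "integrable \<mu> g"
  shows "integrable (env I) (\<lambda>e. g (e i))"
  using integrable_distr_eq[of "\<lambda>e. e i" "env I" \<mu> g] distr_env_coord[OF assms(1)] assms
  by (simp add: measurable_component_singleton)

lemma product_sigma_finite_env: "product_sigma_finite (\<lambda>_::'i. \<mu>)"
  unfolding product_sigma_finite_def by (auto intro: sigma_finite_measure_axioms)

lemma integrable_env_fold:
  fixes f :: "('i \<Rightarrow> real) \<Rightarrow> real"
  assumes "I \<inter> J = {}" "finite I" "finite J" and f: "integrable (env (I \<union> J)) f"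
  shows "integrable (env I) (\<lambda>y. \<integral>x. f (merge I J (y, x)) \<partial>env J)"
proof -
  interpret product_sigma_finite "\<lambda>_::'i. \<mu>"
    by (rule product_sigma_finite_env)
  interpret I: finite_product_sigma_finite "\<lambda>_::'i. \<mu>" I
    by standard (use assms in auto)
  interpret J: finite_product_sigma_finite "\<lambda>_::'i. \<mu>" J
    by standard (use assms in auto)
  interpret IJ: pair_sigma_finite "env I" "env J" ..
  have "integrable (env I \<Otimes>\<^sub>M env J) (\<lambda>p. f (merge I J p))"
    using distr_merge[OF assms(1-3)] f by (intro integrable_distr[OF measurable_merge]) simp
  then show ?thesis
    by (rule IJ.integrable_fst')
qed

lemma measurable_path_energy:
  "\<forall>j\<in>{1..m}. \<pi> q j \<in> S \<Longrightarrow> path_energy \<pi> m q \<in> borel_measurable (env ({1..m} \<times> S))"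
  unfolding path_energy_def[abs_def] by (intro borel_measurable_sum measurable_env_coord) auto

lemma integrable_path_energy:
  "\<forall>j\<in>{1..m}. \<pi> q j \<in> S \<Longrightarrow> integrable (env ({1..m} \<times> S)) (path_energy \<pi> m q)"
  unfolding path_energy_def[abs_def]
  by (intro Bochner_Integration.integrable_sum integrable_env_coord[OF _ integrable_identity]) auto

lemma measurable_log_partition:
  assumes "admissible Q c \<pi> m S"
  shows "log_partition \<beta> Q c \<pi> m \<in> borel_measurable (env ({1..m} \<times> S))"
proof -
  have [measurable]: "q \<in> Q \<Longrightarrow> path_energy \<pi> m q \<in> borel_measurable (env ({1..m} \<times> S))" for q
    using assms by (intro measurable_path_energy) (auto simp: admissible_def)
  show ?thesis
    unfolding log_partition_def[abs_def] by measurable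
qed

lemma integrable_log_partition:
  assumes adm: "admissible Q c \<pi> m S"
  shows "integrable (env ({1..m} \<times> S)) (log_partition \<beta> Q c \<pi> m)"
proof (rule Bochner_Integration.integrable_bound)
  note finite_measure_env[of "{1..m} \<times> S"]
  moreover have "integrable (env ({1..m} \<times> S)) (\<lambda>e. \<bar>path_energy \<pi> m q e\<bar>)" if "q \<in> Q" for q
    using adm that by (intro integrable_abs integrable_path_energy) (auto simp: admissible_def)
  ultimately show "integrable (env ({1..m} \<times> S))
      (\<lambda>e. \<bar>ln (sum c Q)\<bar> + \<beta> * (\<Sum>q\<in>Q. \<bar>path_energy \<pi> m q e\<bar>))"
    by (intro Bochner_Integration.integrable_add finite_measure.integrable_const integrable_mult_right
        Bochner_Integration.integrable_sum)
  show "AE e in env ({1..m} \<times> S). norm (log_partition \<beta> Q c \<pi> m e)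
      \<le> norm (\<bar>ln (sum c Q)\<bar> + \<beta> * (\<Sum>q\<in>Q. \<bar>path_energy \<pi> m q e\<bar>))"
  proof (intro AE_I2)
    fix e
    have "0 \<le> \<beta> * (\<Sum>q\<in>Q. \<bar>path_energy \<pi> m q e\<bar>)"
      using beta_pos by (intro mult_nonneg_nonneg sum_nonneg) auto
    then show "norm (log_partition \<beta> Q c \<pi> m e)
        \<le> norm (\<bar>ln (sum c Q)\<bar> + \<beta> * (\<Sum>q\<in>Q. \<bar>path_energy \<pi> m q e\<bar>))"
      using abs_log_partition_le[OF adm less_imp_le[OF beta_pos], of e] by simp
  qed
qed (rule measurable_log_partition[OF adm])

lemma nn_integral_env_convex_comb:
  fixes g :: "real \<Rightarrow> real"
  assumes Q: "finite Q" "\<And>q. q \<in> Q \<Longrightarrow> 0 \<le> a q" "sum a Q = 1" "\<And>q. q \<in> Q \<Longrightarrow> i q \<in> I"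
    and g: "g \<in> borel_measurable borel" "\<And>v. 0 \<le> g v"
  shows "(\<integral>\<^sup>+y. (\<Sum>q\<in>Q. a q * g (y (i q))) \<partial>env I) = (\<integral>\<^sup>+v. g v \<partial>\<mu>)"
proof -
  have g_coord: "q \<in> Q \<Longrightarrow> (\<lambda>y. g (y (i q))) \<in> borel_measurable (env I)" for q
    by (rule measurable_compose[OF measurable_env_coord[OF Q(4)] g(1)])
  have "(\<integral>\<^sup>+y. (\<Sum>q\<in>Q. a q * g (y (i q))) \<partial>env I)
      = (\<integral>\<^sup>+y. (\<Sum>q\<in>Q. ennreal (a q) * ennreal (g (y (i q)))) \<partial>env I)"
  proof (intro nn_integral_cong)
    fix y
    have "(\<Sum>q\<in>Q. ennreal (a q) * ennreal (g (y (i q)))) = (\<Sum>q\<in>Q. ennreal (a q * g (y (i q))))"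
      using Q(2) g(2) by (intro sum.cong refl) (simp add: ennreal_mult)
    then show "ennreal (\<Sum>q\<in>Q. a q * g (y (i q))) = (\<Sum>q\<in>Q. ennreal (a q) * ennreal (g (y (i q))))"
      using Q(2) g(2) by simp
  qed
  also have "\<dots> = (\<Sum>q\<in>Q. (\<integral>\<^sup>+y. ennreal (a q) * ennreal (g (y (i q))) \<partial>env I))"
  proof (rule nn_integral_sum)
    fix q assume "q \<in> Q"
    then have [measurable]: "(\<lambda>y. g (y (i q))) \<in> borel_measurable (env I)"
      by (rule g_coord)
    show "(\<lambda>y. ennreal (a q) * ennreal (g (y (i q)))) \<in> borel_measurable (env I)"
      by measurable
  qed
  also have "\<dots> = (\<Sum>q\<in>Q. ennreal (a q) * (\<integral>\<^sup>+v. g v \<partial>\<mu>))"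
  proof (intro sum.cong refl)
    fix q assume "q \<in> Q"
    then have [measurable]: "(\<lambda>y. g (y (i q))) \<in> borel_measurable (env I)"
      by (rule g_coord)
    have "(\<integral>\<^sup>+y. ennreal (a q) * ennreal (g (y (i q))) \<partial>env I) = ennreal (a q) * (\<integral>\<^sup>+y. g (y (i q)) \<partial>env I)"
      by (rule nn_integral_cmult) measurable
    also have "\<dots> = ennreal (a q) * (\<integral>\<^sup>+v. g v \<partial>\<mu>)"
      using nn_integral_env_coord[OF Q(4)[OF \<open>q \<in> Q\<close>] measurable_compose[OF g(1) measurable_ennreal]]
      by (simp only:)
    finally show "(\<integral>\<^sup>+y. ennreal (a q) * ennreal (g (y (i q))) \<partial>env I) = ennreal (a q) * (\<integral>\<^sup>+v. g v \<partial>\<mu>)" .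
  qed
  also have "\<dots> = (\<integral>\<^sup>+v. g v \<partial>\<mu>)"
    using Q(2,3) by (simp add: sum_distrib_right[symmetric])
  finally show ?thesis .
qed

text \<open>Its exponential is a convex combination
  of the single-site variables \<open>exp (\<beta> y(i)) / mgf \<beta>\<close>, whose mean is 1.\<close>

lemma last_row_fibre_bounds:
  assumes adm: "admissible Q c \<pi> (Suc m) S"
  defines "Z \<equiv> \<lambda>y x. log_partition \<beta> Q (last_row_weights \<beta> c \<pi> m y) \<pi> m x
                    - log_partition \<beta> Q c \<pi> m x - ln (mgf \<beta>)"
  shows "(\<integral>\<^sup>+y. exp (Z y x) \<partial>env ({Suc m} \<times> S)) = 1"
    and "(\<integral>\<^sup>+y. exp (- Z y x) \<partial>env ({Suc m} \<times> S)) \<le> ennreal (mgf \<beta> * mgf (- \<beta>))"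
proof -
  have L_pos: "0 < mgf \<beta>"
    using beta_pos by (auto intro: mgf_pos)
  note ratio = exp_last_row_log_ratio[OF adm L_pos, where x = x]
  have Q: "finite Q" and last_site: "\<And>q. q \<in> Q \<Longrightarrow> (Suc m, \<pi> q (Suc m)) \<in> {Suc m} \<times> S"
    using adm by (auto simp: admissible_def)
  have "(\<integral>\<^sup>+y. exp (Z y x) \<partial>env ({Suc m} \<times> S)) = (\<integral>\<^sup>+v. exp (\<beta> * v) / mgf \<beta> \<partial>\<mu>)"
    unfolding Z_def ratio(3) using L_pos by (intro nn_integral_env_convex_comb[OF Q ratio(1,2) last_site]) auto
  also have "\<dots> = ennreal (mgf \<beta> / mgf \<beta>)"
    using integrable_exp_mult[of \<beta>] beta_pos by (subst nn_integral_eq_integral) (auto simp: mgf_def)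
  finally show "(\<integral>\<^sup>+y. exp (Z y x) \<partial>env ({Suc m} \<times> S)) = 1"
    using L_pos by simp
  have "(\<integral>\<^sup>+y. exp (- Z y x) \<partial>env ({Suc m} \<times> S))
      \<le> (\<integral>\<^sup>+y. (\<Sum>q\<in>Q. c q * exp (\<beta> * path_energy \<pi> m q x) / (\<Sum>q\<in>Q. c q * exp (\<beta> * path_energy \<pi> m q x))
            * (mgf \<beta> * exp (- \<beta> * y (Suc m, \<pi> q (Suc m))))) \<partial>env ({Suc m} \<times> S))"
    unfolding Z_def by (intro nn_integral_mono ennreal_leI ratio(4))
  also have "\<dots> = (\<integral>\<^sup>+v. mgf \<beta> * exp (- \<beta> * v) \<partial>\<mu>)"
    using L_pos by (intro nn_integral_env_convex_comb[OF Q ratio(1,2) last_site]) auto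
  also have "\<dots> = ennreal (mgf \<beta> * mgf (- \<beta>))"
    using integrable_exp_mult[of "- \<beta>"] beta_pos L_pos by (subst nn_integral_eq_integral) (auto simp: mgf_def)
  finally show "(\<integral>\<^sup>+y. exp (- Z y x) \<partial>env ({Suc m} \<times> S)) \<le> ennreal (mgf \<beta> * mgf (- \<beta>))" .
qed

lemma integral_log_partition_Suc:
  assumes adm: "admissible Q c \<pi> (Suc m) S"
  shows "(\<integral>e. log_partition \<beta> Q c \<pi> (Suc m) e \<partial>env ({1..Suc m} \<times> S))
       = (\<integral>y. (\<integral>x. log_partition \<beta> Q (last_row_weights \<beta> c \<pi> m y) \<pi> m x \<partial>env ({1..m} \<times> S))
            \<partial>env ({Suc m} \<times> S))"
proof -
  interpret product_sigma_finite "\<lambda>_::nat \<times> 's. \<mu>"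
    by (rule product_sigma_finite_env)
  have "finite S"
    using adm by (simp add: admissible_def)
  then have "finite ({Suc m} \<times> S)" "finite ({1..m} \<times> S)"
    by simp_all
  moreover note integrable_log_partition[OF adm]
  ultimately have "(\<integral>e. log_partition \<beta> Q c \<pi> (Suc m) e \<partial>env ({1..Suc m} \<times> S))
      = (\<integral>y. (\<integral>x. log_partition \<beta> Q c \<pi> (Suc m) (merge ({Suc m} \<times> S) ({1..m} \<times> S) (y, x))
          \<partial>env ({1..m} \<times> S)) \<partial>env ({Suc m} \<times> S))"
    by (rule product_integral_fold[OF rows_Suc_Int, unfolded rows_Suc_Un])
  then show ?thesis
    unfolding log_partition_merge[OF adm] .
qed

lemma integrable_last_row_average:
  assumes adm: "admissible Q c \<pi> (Suc m) S"
  shows "integrable (env ({Suc m} \<times> S))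
    (\<lambda>y. \<integral>x. log_partition \<beta> Q (last_row_weights \<beta> c \<pi> m y) \<pi> m x \<partial>env ({1..m} \<times> S))"
proof -
  have "finite S"
    using adm by (simp add: admissible_def)
  have "integrable (env ({Suc m} \<times> S \<union> {1..m} \<times> S)) (log_partition \<beta> Q c \<pi> (Suc m))"
    unfolding rows_Suc_Un by (rule integrable_log_partition[OF adm])
  then have "integrable (env ({Suc m} \<times> S)) (\<lambda>y. \<integral>x. log_partition \<beta> Q c \<pi> (Suc m)
      (merge ({Suc m} \<times> S) ({1..m} \<times> S) (y, x)) \<partial>env ({1..m} \<times> S))"
    using \<open>finite S\<close> by (intro integrable_env_fold rows_Suc_Int) auto
  then show ?thesis
    unfolding log_partition_merge[OF adm] .
qed

lemma measurable_last_row_log_partition: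
  assumes adm: "admissible Q c \<pi> (Suc m) S"
  shows "(\<lambda>(y, x). log_partition \<beta> Q (last_row_weights \<beta> c \<pi> m y) \<pi> m x)
    \<in> borel_measurable (env ({Suc m} \<times> S) \<Otimes>\<^sub>M env ({1..m} \<times> S))"
proof -
  have [measurable]: "log_partition \<beta> Q c \<pi> (Suc m) \<in> borel_measurable (env ({Suc m} \<times> S \<union> {1..m} \<times> S))"
    unfolding rows_Suc_Un by (rule measurable_log_partition[OF adm])
  have "(\<lambda>(y, x). log_partition \<beta> Q c \<pi> (Suc m) (merge ({Suc m} \<times> S) ({1..m} \<times> S) (y, x)))
      \<in> borel_measurable (env ({Suc m} \<times> S) \<Otimes>\<^sub>M env ({1..m} \<times> S))"
    by measurable
  then show ?thesis
    unfolding log_partition_merge[OF adm] .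
qed

text \<open>The increment \<open>A y - \<integral>A\<close> of the averaged log-partition function when the last row \<open>y\<close> is
  revealed is the \<open>E\<close>-average of \<open>Z\<close> from \<open>last_row_fibre_bounds\<close>, up to a constant.\<close>

lemma last_row_deviation_bound:
  assumes adm: "admissible Q c \<pi> (Suc m) S"
  defines "R \<equiv> env ({Suc m} \<times> S)" and "E \<equiv> env ({1..m} \<times> S)"
  defines "A \<equiv> \<lambda>y. \<integral>x. log_partition \<beta> Q (last_row_weights \<beta> c \<pi> m y) \<pi> m x \<partial>E"
  shows "(\<integral>\<^sup>+y. exp (A y - (\<integral>y'. A y' \<partial>R)) \<partial>R) + (\<integral>\<^sup>+y. exp (- (A y - (\<integral>y'. A y' \<partial>R))) \<partial>R)
           \<le> ennreal (2 * mgf \<beta> * mgf (- \<beta>))"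
proof -
  define Z where "Z y x = log_partition \<beta> Q (last_row_weights \<beta> c \<pi> m y) \<pi> m x
                    - log_partition \<beta> Q c \<pi> m x - ln (mgf \<beta>)" for y x
  define C where "C = (\<integral>x. log_partition \<beta> Q c \<pi> m x \<partial>E) + ln (mgf \<beta>)"
  have A_int: "integrable R A"
    unfolding A_def R_def E_def by (rule integrable_last_row_average[OF adm])
  have fm_R: "finite_measure R" and fm_E: "finite_measure E"
    unfolding R_def E_def by (rule finite_measure_env)+
  have lp_int: "integrable E (log_partition \<beta> Q c \<pi> m)"
    and lp_last_int: "integrable E (log_partition \<beta> Q (last_row_weights \<beta> c \<pi> m y) \<pi> m)" for y
    unfolding E_def
    by (rule integrable_log_partition[OF admissible_SucD[OF adm]],
        rule integrable_log_partition[OF admissible_last_row_weights[OF adm]])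
  have Z_int: "integrable E (Z y)" for y
    unfolding Z_def[abs_def] using lp_int lp_last_int fm_E
    by (intro Bochner_Integration.integrable_diff finite_measure.integrable_const)
  have const_int: "integrable E (\<lambda>x. ln (mgf \<beta>))"
    by (rule finite_measure.integrable_const[OF fm_E])
  have B_eq: "(\<integral>x. Z y x \<partial>E) = A y - C" for y
    using lp_int lp_last_int const_int
    unfolding Z_def A_def C_def E_def by simp
  have B_int: "integrable R (\<lambda>y. \<integral>x. Z y x \<partial>E)"
    unfolding B_eq using A_int fm_R by (intro Bochner_Integration.integrable_diff finite_measure.integrable_const)
  have "(\<integral>y'. A y' - C \<partial>R) = (\<integral>y'. A y' \<partial>R) - C"
    using Bochner_Integration.integral_diff[OF A_int finite_measure.integrable_const[OF fm_R]]
    by (simp add: R_def)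
  then have deviation: "(\<integral>x. Z y x \<partial>E) - (\<integral>y'. (\<integral>x. Z y' x \<partial>E) \<partial>R) = A y - (\<integral>y'. A y' \<partial>R)" for y
    by (simp add: B_eq)
  have [measurable]: "(\<lambda>(y, x). log_partition \<beta> Q (last_row_weights \<beta> c \<pi> m y) \<pi> m x) \<in> borel_measurable (R \<Otimes>\<^sub>M E)"
    unfolding R_def E_def by (rule measurable_last_row_log_partition[OF adm])
  have [measurable]: "log_partition \<beta> Q c \<pi> m \<in> borel_measurable E"
    using lp_int by auto
  have Z_meas: "(\<lambda>(y, x). Z y x) \<in> borel_measurable (R \<Otimes>\<^sub>M E)"
    unfolding Z_def by measurable
  have up: "(\<integral>\<^sup>+y. exp (Z y x) \<partial>R) \<le> ennreal 1" for x
    using last_row_fibre_bounds(1)[OF adm] by (simp add: Z_def R_def)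
  have down: "(\<integral>\<^sup>+y. exp (- Z y x) \<partial>R) \<le> ennreal (mgf \<beta> * mgf (- \<beta>))" for x
    using last_row_fibre_bounds(2)[OF adm] by (simp add: Z_def R_def)
  have prob_R: "prob_space R" and prob_E: "prob_space E"
    unfolding R_def E_def by (rule prob_space_env)+
  have "0 \<le> mgf \<beta> * mgf (- \<beta>)"
    using mgf_pos[of \<beta>] mgf_pos[of "- \<beta>"] beta_pos by simp
  from nn_integral_exp_centred_average_le[OF prob_R prob_E Z_meas Z_int B_int up down zero_le_one this]
  show ?thesis
    by (simp add: deviation mult.assoc)
qed

lemma nn_integral_exp_log_partition_Suc:
  assumes adm: "admissible Q c \<pi> (Suc m) S"
  defines "R \<equiv> env ({Suc m} \<times> S)" and "E \<equiv> env ({1..m} \<times> S)"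
  defines "A \<equiv> \<lambda>y. \<integral>x. log_partition \<beta> Q (last_row_weights \<beta> c \<pi> m y) \<pi> m x \<partial>E"
  shows "(\<integral>\<^sup>+e. exp (s * (log_partition \<beta> Q c \<pi> (Suc m) e
              - (\<integral>e'. log_partition \<beta> Q c \<pi> (Suc m) e' \<partial>env ({1..Suc m} \<times> S)))) \<partial>env ({1..Suc m} \<times> S))
       = (\<integral>\<^sup>+y. (\<integral>\<^sup>+x. exp (s * (log_partition \<beta> Q (last_row_weights \<beta> c \<pi> m y) \<pi> m x - A y)) \<partial>E)
              * ennreal (exp (s * (A y - (\<integral>y'. A y' \<partial>R)))) \<partial>R)"
proof -
  interpret product_sigma_finite "\<lambda>_::nat \<times> 's. \<mu>"
    by (rule product_sigma_finite_env)
  have "finite S"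
    using adm by (simp add: admissible_def)
  then have fin: "finite ({Suc m} \<times> S)" "finite ({1..m} \<times> S)"
    by simp_all
  have mean: "(\<integral>e'. log_partition \<beta> Q c \<pi> (Suc m) e' \<partial>env ({1..Suc m} \<times> S)) = (\<integral>y'. A y' \<partial>R)"
    unfolding A_def R_def E_def by (rule integral_log_partition_Suc[OF adm])
  have [measurable]: "A \<in> borel_measurable R"
    using integrable_last_row_average[OF adm] by (simp add: A_def R_def E_def)
  have [measurable]: "log_partition \<beta> Q c \<pi> (Suc m) \<in> borel_measurable (env ({1..Suc m} \<times> S))"
    by (rule measurable_log_partition[OF adm])
  have integrand_meas: "(\<lambda>e. ennreal (exp (s * (log_partition \<beta> Q c \<pi> (Suc m) e - (\<integral>y'. A y' \<partial>R)))))
      \<in> borel_measurable (env ({1..Suc m} \<times> S))"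
    by measurable
  have "(\<integral>\<^sup>+e. exp (s * (log_partition \<beta> Q c \<pi> (Suc m) e - (\<integral>y'. A y' \<partial>R))) \<partial>env ({1..Suc m} \<times> S))
      = (\<integral>\<^sup>+y. (\<integral>\<^sup>+x. exp (s * (log_partition \<beta> Q c \<pi> (Suc m) (merge ({Suc m} \<times> S) ({1..m} \<times> S) (y, x))
            - (\<integral>y'. A y' \<partial>R))) \<partial>E) \<partial>R)"
    using product_nn_integral_fold[OF rows_Suc_Int fin integrand_meas[folded rows_Suc_Un], unfolded rows_Suc_Un]
    unfolding R_def E_def .
  also have "\<dots> = (\<integral>\<^sup>+y. (\<integral>\<^sup>+x. exp (s * (log_partition \<beta> Q (last_row_weights \<beta> c \<pi> m y) \<pi> m x - A y)) \<partial>E)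
              * ennreal (exp (s * (A y - (\<integral>y'. A y' \<partial>R)))) \<partial>R)"
  proof (intro nn_integral_cong)
    fix y
    have [measurable]: "log_partition \<beta> Q (last_row_weights \<beta> c \<pi> m y) \<pi> m \<in> borel_measurable E"
      unfolding E_def by (rule measurable_log_partition[OF admissible_last_row_weights[OF adm]])
    have "(\<integral>\<^sup>+x. exp (s * (log_partition \<beta> Q (last_row_weights \<beta> c \<pi> m y) \<pi> m x - (\<integral>y'. A y' \<partial>R))) \<partial>E)
        = (\<integral>\<^sup>+x. exp (s * (log_partition \<beta> Q (last_row_weights \<beta> c \<pi> m y) \<pi> m x - A y))
              * ennreal (exp (s * (A y - (\<integral>y'. A y' \<partial>R)))) \<partial>E)"
      by (intro nn_integral_cong) (simp add: ennreal_mult[symmetric] exp_add[symmetric] algebra_simps)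
    also have "\<dots> = (\<integral>\<^sup>+x. exp (s * (log_partition \<beta> Q (last_row_weights \<beta> c \<pi> m y) \<pi> m x - A y)) \<partial>E)
              * ennreal (exp (s * (A y - (\<integral>y'. A y' \<partial>R))))"
      by (rule nn_integral_multc) measurable
    finally show "(\<integral>\<^sup>+x. exp (s * (log_partition \<beta> Q c \<pi> (Suc m) (merge ({Suc m} \<times> S) ({1..m} \<times> S) (y, x))
            - (\<integral>y'. A y' \<partial>R))) \<partial>E)
        = (\<integral>\<^sup>+x. exp (s * (log_partition \<beta> Q (last_row_weights \<beta> c \<pi> m y) \<pi> m x - A y)) \<partial>E)
              * ennreal (exp (s * (A y - (\<integral>y'. A y' \<partial>R))))"
      unfolding log_partition_merge[OF adm] .
  qed
  finally show ?thesis
    unfolding mean .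
qed

lemma nn_integral_exp_last_row_deviation_le:
  assumes adm: "admissible Q c \<pi> (Suc m) S" and "0 \<le> t" "t \<le> 1" "\<sigma> \<in> {1, -1}"
  defines "R \<equiv> env ({Suc m} \<times> S)" and "E \<equiv> env ({1..m} \<times> S)"
  defines "A \<equiv> \<lambda>y. \<integral>x. log_partition \<beta> Q (last_row_weights \<beta> c \<pi> m y) \<pi> m x \<partial>E"
  shows "(\<integral>\<^sup>+y. exp (\<sigma> * t * (A y - (\<integral>y'. A y' \<partial>R))) \<partial>R) \<le> ennreal (exp (2 * mgf \<beta> * mgf (- \<beta>) * t\<^sup>2))"
proof -
  have prob_R: "prob_space R"
    unfolding R_def by (rule prob_space_env)
  have A_int: "integrable R A"
    unfolding A_def R_def E_def by (rule integrable_last_row_average[OF adm])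
  have K_nonneg: "0 \<le> 2 * mgf \<beta> * mgf (- \<beta>)"
    using mgf_pos[of \<beta>] mgf_pos[of "- \<beta>"] beta_pos by simp
  have "(\<integral>\<^sup>+y. exp (t * (\<sigma> * (A y - (\<integral>y'. A y' \<partial>R)))) \<partial>R) \<le> ennreal (exp (2 * mgf \<beta> * mgf (- \<beta>) * t\<^sup>2))"
  proof (rule prob_space.nn_integral_exp_le_of_two_sided_bound[OF prob_R _ _ _ K_nonneg \<open>0 \<le> t\<close> \<open>t \<le> 1\<close>])
    show "integrable R (\<lambda>y. \<sigma> * (A y - (\<integral>y'. A y' \<partial>R)))"
      using A_int prob_R by (simp add: prob_space_def finite_measure.integrable_const)
    show "(\<integral>y. \<sigma> * (A y - (\<integral>y'. A y' \<partial>R)) \<partial>R) = 0"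
      using A_int prob_R by (simp add: prob_space_def finite_measure.integrable_const prob_space.prob_space)
    show "(\<integral>\<^sup>+y. exp (\<sigma> * (A y - (\<integral>y'. A y' \<partial>R))) \<partial>R) + (\<integral>\<^sup>+y. exp (- (\<sigma> * (A y - (\<integral>y'. A y' \<partial>R)))) \<partial>R)
        \<le> ennreal (2 * mgf \<beta> * mgf (- \<beta>))"
      using \<open>\<sigma> \<in> {1, -1}\<close> last_row_deviation_bound[OF adm] by (auto simp: add.commute A_def R_def E_def)
  qed
  then show ?thesis
    by (simp add: mult_ac)
qed

lemma nn_integral_exp_log_partition_le:
  assumes "admissible Q c \<pi> m S" "0 \<le> t" "t \<le> 1" "\<sigma> \<in> {1, -1}"
  shows "(\<integral>\<^sup>+e. exp (\<sigma> * t * (log_partition \<beta> Q c \<pi> m e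
              - (\<integral>e'. log_partition \<beta> Q c \<pi> m e' \<partial>env ({1..m} \<times> S)))) \<partial>env ({1..m} \<times> S))
    \<le> ennreal (exp (real m * (2 * mgf \<beta> * mgf (- \<beta>)) * t\<^sup>2))"
  using assms(1)
proof (induction m arbitrary: c)
  case 0
  then show ?case
    by (simp add: log_partition_def path_energy_def prob_space.emeasure_space_1[OF prob_space_env])
next
  case (Suc m)
  define K where "K = 2 * mgf \<beta> * mgf (- \<beta>)"
  define R where "R = env ({Suc m} \<times> S)"
  define E where "E = env ({1..m} \<times> S)"
  define A where "A y = (\<integral>x. log_partition \<beta> Q (last_row_weights \<beta> c \<pi> m y) \<pi> m x \<partial>E)" for y
  have last_row: "(\<integral>\<^sup>+y. exp (\<sigma> * t * (A y - (\<integral>y'. A y' \<partial>R))) \<partial>R) \<le> ennreal (exp (K * t\<^sup>2))"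
    using nn_integral_exp_last_row_deviation_le[OF Suc.prems assms(2-4)] by (simp add: A_def[abs_def] R_def E_def K_def)
  have [measurable]: "A \<in> borel_measurable R"
    using integrable_last_row_average[OF Suc.prems] by (simp add: A_def[abs_def] R_def E_def)
  have fibres: "(\<integral>\<^sup>+x. exp (\<sigma> * t * (log_partition \<beta> Q (last_row_weights \<beta> c \<pi> m y) \<pi> m x - A y)) \<partial>E)
      \<le> ennreal (exp (real m * K * t\<^sup>2))" for y
    using Suc.IH[OF admissible_last_row_weights[OF Suc.prems]] by (simp add: A_def E_def K_def)
  have "(\<integral>\<^sup>+e. exp (\<sigma> * t * (log_partition \<beta> Q c \<pi> (Suc m) e
              - (\<integral>e'. log_partition \<beta> Q c \<pi> (Suc m) e' \<partial>env ({1..Suc m} \<times> S)))) \<partial>env ({1..Suc m} \<times> S))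
      = (\<integral>\<^sup>+y. (\<integral>\<^sup>+x. exp (\<sigma> * t * (log_partition \<beta> Q (last_row_weights \<beta> c \<pi> m y) \<pi> m x - A y)) \<partial>E)
              * ennreal (exp (\<sigma> * t * (A y - (\<integral>y'. A y' \<partial>R)))) \<partial>R)"
    unfolding A_def[abs_def] R_def E_def by (rule nn_integral_exp_log_partition_Suc[OF Suc.prems])
  also have "\<dots> \<le> (\<integral>\<^sup>+y. ennreal (exp (real m * K * t\<^sup>2)) * ennreal (exp (\<sigma> * t * (A y - (\<integral>y'. A y' \<partial>R)))) \<partial>R)"
    by (intro nn_integral_mono mult_right_mono fibres) simp
  also have "\<dots> = ennreal (exp (real m * K * t\<^sup>2)) * (\<integral>\<^sup>+y. exp (\<sigma> * t * (A y - (\<integral>y'. A y' \<partial>R))) \<partial>R)"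
    by (rule nn_integral_cmult) measurable
  also have "\<dots> \<le> ennreal (exp (real m * K * t\<^sup>2)) * ennreal (exp (K * t\<^sup>2))"
    by (intro mult_left_mono last_row) simp
  also have "\<dots> = ennreal (exp (real (Suc m) * K * t\<^sup>2))"
    by (simp add: ennreal_mult[symmetric] exp_add[symmetric] algebra_simps)
  finally show ?case
    unfolding K_def .
qed

lemma exp_moment_log_partition_iid:
  assumes adm: "admissible Q c \<pi> m S" and "0 < m" and M: "prob_space M"
    and indep: "prob_space.indep_vars M (\<lambda>_. borel) X ({1..m} \<times> S)"
    and law: "\<And>i. i \<in> {1..m} \<times> S \<Longrightarrow> distr M borel (X i) = \<mu>"
    and t: "0 \<le> t" "t \<le> 1" and \<sigma>: "\<sigma> \<in> {1, -1}"
  defines "F \<equiv> \<lambda>\<omega>. log_partition \<beta> Q c \<pi> m (\<lambda>i\<in>{1..m} \<times> S. X i \<omega>)"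
  shows "integrable M F"
    and "integrable M (\<lambda>\<omega>. exp (\<sigma> * t * (F \<omega> - prob_space.expectation M F)))"
    and "prob_space.expectation M (\<lambda>\<omega>. exp (\<sigma> * t * (F \<omega> - prob_space.expectation M F)))
           \<le> exp (real m * (2 * mgf \<beta> * mgf (- \<beta>)) * t\<^sup>2)"
proof -
  interpret M: prob_space M by (rule M)
  define I where "I = {1..m} \<times> S"
  define V where "V \<omega> = (\<lambda>i\<in>I. X i \<omega>)" for \<omega>
  define \<Phi> where "\<Phi> = log_partition \<beta> Q c \<pi> m"
  have F_eq: "F = (\<lambda>\<omega>. \<Phi> (V \<omega>))"
    by (simp add: F_def \<Phi>_def V_def I_def)
  have V_meas: "V \<in> M \<rightarrow>\<^sub>M env I"
    unfolding V_def using indep measurable_cong_sets[OF refl sets_law]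
    by (intro measurable_restrict) (auto simp: M.indep_vars_def I_def)
  have "I \<noteq> {}"
  proof -
    obtain q where "q \<in> Q"
      using adm by (auto simp: admissible_def)
    then have "(1, \<pi> q 1) \<in> I"
      using adm \<open>0 < m\<close> by (auto simp: admissible_def I_def)
    then show ?thesis by auto
  qed
  then have distr_V: "distr M (env I) V = env I"
    unfolding V_def using indep law sets_law by (intro M.distr_restrict_iid) (auto simp: I_def)
  have \<Phi>_meas: "\<Phi> \<in> borel_measurable (env I)" and \<Phi>_int: "integrable (env I) \<Phi>"
    unfolding \<Phi>_def I_def by (rule measurable_log_partition[OF adm] integrable_log_partition[OF adm])+
  show F_int: "integrable M F"
    unfolding F_eq using integrable_distr_eq[OF V_meas \<Phi>_meas] distr_V \<Phi>_int by simp
  have mean: "M.expectation F = (\<integral>e. \<Phi> e \<partial>env I)"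
    unfolding F_eq using integral_distr[OF V_meas \<Phi>_meas] distr_V by simp
  have F_meas[measurable]: "F \<in> borel_measurable M"
    using F_int by auto
  have "(\<integral>\<^sup>+\<omega>. exp (\<sigma> * t * (F \<omega> - M.expectation F)) \<partial>M)
      = (\<integral>\<^sup>+e. exp (\<sigma> * t * (\<Phi> e - (\<integral>e'. \<Phi> e' \<partial>env I))) \<partial>distr M (env I) V)"
    using V_meas \<Phi>_meas mean unfolding F_eq by (subst nn_integral_distr) (auto intro: measurable_compose)
  also have "\<dots> \<le> ennreal (exp (real m * (2 * mgf \<beta> * mgf (- \<beta>)) * t\<^sup>2))"
    unfolding distr_V unfolding \<Phi>_def I_def by (rule nn_integral_exp_log_partition_le[OF adm t \<sigma>])
  finally have nn_bound: "(\<integral>\<^sup>+\<omega>. exp (\<sigma> * t * (F \<omega> - M.expectation F)) \<partial>M)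
      \<le> ennreal (exp (real m * (2 * mgf \<beta> * mgf (- \<beta>)) * t\<^sup>2))" .
  show exp_int: "integrable M (\<lambda>\<omega>. exp (\<sigma> * t * (F \<omega> - M.expectation F)))"
    using nn_bound by (intro integrableI_bounded) (auto simp: le_less_trans)
  show "M.expectation (\<lambda>\<omega>. exp (\<sigma> * t * (F \<omega> - M.expectation F)))
      \<le> exp (real m * (2 * mgf \<beta> * mgf (- \<beta>)) * t\<^sup>2)"
    using nn_bound nn_integral_eq_integral[OF exp_int] by simp
qed

lemma log_partition_concentration:
  assumes adm: "admissible Q c \<pi> m S" and "0 < m" and M: "prob_space M"
    and indep: "prob_space.indep_vars M (\<lambda>_. borel) X ({1..m} \<times> S)"
    and law: "\<And>i. i \<in> {1..m} \<times> S \<Longrightarrow> distr M borel (X i) = \<mu>"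
    and \<sigma>: "\<sigma> \<in> {1, -1}"
  defines "F \<equiv> \<lambda>\<omega>. log_partition \<beta> Q c \<pi> m (\<lambda>i\<in>{1..m} \<times> S. X i \<omega>)"
    and "K \<equiv> 2 * mgf \<beta> * mgf (- \<beta>)"
  shows "integrable M F \<and>
      (\<forall>t \<in> {0..1}. integrable M (\<lambda>\<omega>. exp (\<sigma> * t * (F \<omega> - prob_space.expectation M F))) \<and>
         prob_space.expectation M (\<lambda>\<omega>. exp (\<sigma> * t * (F \<omega> - prob_space.expectation M F)))
           \<le> exp (real m * K * t\<^sup>2)) \<and>
      (\<forall>x > 0. measure M {\<omega> \<in> space M. \<sigma> * (1 / real m) * (F \<omega> - prob_space.expectation M F) > x}
         \<le> (if x \<le> 2 * K then exp (- (real m * x\<^sup>2) / (4 * K)) else exp (- real m * (x - K))))"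
proof -
  interpret M: prob_space M by (rule M)
  have F_int: "integrable M F"
    using exp_moment_log_partition_iid(1)[OF adm \<open>0 < m\<close> M indep law _ _ \<sigma>, of 0] unfolding F_def by simp
  have mgf_int: "integrable M (\<lambda>\<omega>. exp (\<sigma> * t * (F \<omega> - M.expectation F)))"
    and mgf_le: "M.expectation (\<lambda>\<omega>. exp (\<sigma> * t * (F \<omega> - M.expectation F))) \<le> exp (real m * K * t\<^sup>2)"
    if "0 \<le> t" "t \<le> 1" for t
    using exp_moment_log_partition_iid(2,3)[OF adm \<open>0 < m\<close> M indep law that \<sigma>] unfolding F_def K_def
    by simp_all
  have F_meas: "(\<lambda>\<omega>. \<sigma> * (F \<omega> - M.expectation F)) \<in> borel_measurable M"
    using F_int by auto
  have K_pos: "0 < K"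
    using mgf_pos[of \<beta>] mgf_pos[of "- \<beta>"] beta_pos by (simp add: K_def)
  have tail: "M.prob {\<omega> \<in> space M. (1 / real m) * (\<sigma> * (F \<omega> - M.expectation F)) > x}
      \<le> (if x \<le> 2 * K then exp (- (real m * x\<^sup>2) / (4 * K)) else exp (- real m * (x - K)))" if "0 < x" for x
    using mgf_int mgf_le
    by (intro M.prob_gt_le_of_subgaussian_mgf[OF F_meas _ K_pos that]) (auto simp: mult_ac \<open>0 < m\<close>)
  show ?thesis
    using F_int mgf_int mgf_le tail by (auto simp: mult_ac)
qed

end

lemma finite_unit_steps: "finite (unit_steps :: (int^'d::finite) set)"
proof -
  have "(unit_steps :: (int^'d) set) \<subseteq> (\<lambda>p. axis (fst p) (snd p)) ` (UNIV \<times> {1, -1::int})"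
    by (auto simp: unit_steps_def image_iff)
  then show ?thesis
    by (rule finite_subset) auto
qed

lemma finite_walk_paths: "finite (walk_paths n :: (int^'d::finite) list set)"
  unfolding walk_paths_def using finite_lists_length_eq[OF finite_unit_steps]
  by (simp add: conj_commute)

definition walk_weights :: "nat \<Rightarrow> (real^'d \<Rightarrow> real) \<Rightarrow> (int^'d::finite) list \<Rightarrow> real" where
  "walk_weights n g xs = g (to_real_vec (walk_pos xs n)) / real (card (walk_paths n :: (int^'d) list set))"

definition walk_sites :: "nat \<Rightarrow> (int^'d::finite) set" where
  "walk_sites n = (\<lambda>p. walk_pos (fst p) (snd p)) ` (walk_paths n \<times> {1..n})"

lemma admissible_walk:
  fixes g :: "real^'d::finite \<Rightarrow> real"
  assumes g_nonneg: "\<And>x. 0 \<le> g x"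
    and g_pos: "walkE n (\<lambda>S. if g (to_real_vec (S n)) > 0 then 1 else 0) \<noteq> 0"
  shows "admissible (walk_paths n) (walk_weights n g) walk_pos n (walk_sites n)"
proof -
  obtain xs :: "(int^'d) list" where xs: "xs \<in> walk_paths n" "g (to_real_vec (walk_pos xs n)) > 0"
    using g_pos unfolding walkE_def by (metis (mono_tags, lifting) div_0 sum.neutral)
  then have "0 < card (walk_paths n :: (int^'d) list set)"
    using finite_walk_paths by (auto simp: card_gt_0_iff)
  then show ?thesis
    unfolding admissible_def walk_weights_def walk_sites_def using xs finite_walk_paths g_nonneg by force
qed

lemma ln_walkE_eq_log_partition:
  fixes g :: "real^'d::finite \<Rightarrow> real" and \<eta> :: "nat \<times> (int^'d) \<Rightarrow> real"
  shows "ln (walkE n (\<lambda>S. g (to_real_vec (S n)) * exp (\<beta> * (\<Sum>j=1..n. \<eta> (j, S j)))))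
       = log_partition \<beta> (walk_paths n) (walk_weights n g) walk_pos n (\<lambda>i\<in>{1..n} \<times> walk_sites n. \<eta> i)"
proof -
  have "path_energy walk_pos n xs (\<lambda>i\<in>{1..n} \<times> walk_sites n. \<eta> i) = (\<Sum>j=1..n. \<eta> (j, walk_pos xs j))"
    if "xs \<in> walk_paths n" for xs
    unfolding path_energy_def walk_sites_def using that by (intro sum.cong) force+
  then show ?thesis
    unfolding log_partition_def walkE_def walk_weights_def by (simp add: sum_divide_distrib)
qed

lemma (in prob_space) exp_moment_law_distr:
  assumes X: "random_variable borel X" and "0 < \<beta>"
    and integrable_exp: "integrable M (\<lambda>\<omega>. exp (\<beta> * \<bar>X \<omega>\<bar>))"
  shows "exp_moment_law (distr M borel X) \<beta>"
proof (rule exp_moment_law.intro)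
  show "prob_space (distr M borel X)"
    by (rule prob_space_distr[OF X])
  show "exp_moment_law_axioms (distr M borel X) \<beta>"
  proof
    show "integrable (distr M borel X) (\<lambda>v. exp (\<beta> * \<bar>v\<bar>))"
      using integrable_exp by (subst integrable_distr_eq[OF X]) auto
  qed (simp_all add: \<open>0 < \<beta>\<close>)
qed

theorem theorem1p2:
  fixes M :: "'w measure"
    and \<eta> :: "'w \<Rightarrow> nat \<times> (int^'d::finite) \<Rightarrow> real"
    and f :: "nat \<Rightarrow> real^'d \<Rightarrow> real"
    and \<beta> :: real
  assumes P: "prob_space M"
    and indep: "prob_space.indep_vars M (\<lambda>_. borel) (\<lambda>i \<omega>. \<eta> \<omega> i) UNIV"
    and ident: "\<And>i. distr M borel (\<lambda>\<omega>. \<eta> \<omega> i) = distr M borel (\<lambda>\<omega>. \<eta> \<omega> (0, 0))"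
    and nonconst: "\<not> (\<exists>c. AE \<omega> in M. \<eta> \<omega> (0, 0) = c)"
    and beta_pos: "\<beta> > 0"
    and expmom: "integrable M (\<lambda>\<omega>. exp (\<beta> * \<bar>\<eta> \<omega> (0, 0)\<bar>))"
    and f_bdd: "\<And>n. n \<ge> 1 \<Longrightarrow> \<exists>B. \<forall>x. \<bar>f n x\<bar> \<le> B"
    and f_nonneg: "\<And>n x. n \<ge> 1 \<Longrightarrow> f n x \<ge> 0"
    and f_pos: "\<And>n. n \<ge> 1 \<Longrightarrow>
                  walkE n (\<lambda>S. if f n (to_real_vec (S n)) > 0 then 1 else 0) \<noteq> 0"
  defines "K \<equiv> 2 * exp (ln (prob_space.expectation M (\<lambda>\<omega>. exp (\<beta> * \<eta> \<omega> (0, 0))))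
                      + ln (prob_space.expectation M (\<lambda>\<omega>. exp ((- \<beta>) * \<eta> \<omega> (0, 0)))))"
    and "Y \<equiv> partition_Y \<beta> \<eta> f"
  shows "\<forall>n \<ge> 1. \<forall>\<sigma> \<in> {1, -1::real}.
           integrable M (\<lambda>\<omega>. ln (Y n \<omega>)) \<and>
           (\<forall>t \<in> {0..1::real}.
              integrable M (\<lambda>\<omega>. exp (\<sigma> * t * (ln (Y n \<omega>)
                   - prob_space.expectation M (\<lambda>\<omega>'. ln (Y n \<omega>'))))) \<and>
              prob_space.expectation M (\<lambda>\<omega>. exp (\<sigma> * t * (ln (Y n \<omega>)
                   - prob_space.expectation M (\<lambda>\<omega>'. ln (Y n \<omega>')))))
                \<le> exp (real n * K * t\<^sup>2)) \<and>
           (\<forall>x > 0.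
              measure M {\<omega> \<in> space M. \<sigma> * (1 / real n) * (ln (Y n \<omega>)
                   - prob_space.expectation M (\<lambda>\<omega>'. ln (Y n \<omega>'))) > x}
                \<le> (if x \<le> 2 * K then exp (- (real n * x\<^sup>2) / (4 * K))
                    else exp (- real n * (x - K))))"
proof -
  interpret prob_space M by (rule P)
  have rv: "random_variable borel (\<lambda>\<omega>. \<eta> \<omega> i)" for i
    using indep unfolding indep_vars_def by blast
  define \<mu> where "\<mu> = distr M borel (\<lambda>\<omega>. \<eta> \<omega> (0, 0))"
  interpret law: exp_moment_law \<mu> \<beta>
    unfolding \<mu>_def by (rule exp_moment_law_distr[OF rv beta_pos expmom])
  have mgf_eq: "law.mgf s = expectation (\<lambda>\<omega>. exp (s * \<eta> \<omega> (0, 0)))" for s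
    unfolding law.mgf_def unfolding \<mu>_def by (rule integral_distr[OF rv]) simp
  have "K = 2 * exp (ln (law.mgf \<beta>) + ln (law.mgf (- \<beta>)))"
    unfolding K_def mgf_eq ..
  then have K_eq: "K = 2 * law.mgf \<beta> * law.mgf (- \<beta>)"
    using law.mgf_pos[of \<beta>] law.mgf_pos[of "- \<beta>"] beta_pos by (simp add: exp_add)
  have adm: "admissible (walk_paths n) (walk_weights n (f n)) walk_pos n (walk_sites n)" if "n \<ge> 1" for n
    using f_nonneg[OF that] f_pos[OF that] by (rule admissible_walk)
  have lnY: "ln (Y n \<omega>) = log_partition \<beta> (walk_paths n) (walk_weights n (f n)) walk_pos n
      (\<lambda>i\<in>{1..n} \<times> walk_sites n. \<eta> \<omega> i)" for n \<omega>
    unfolding Y_def partition_Y_def by (rule ln_walkE_eq_log_partition)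
  have site_law: "distr M borel (\<lambda>\<omega>. \<eta> \<omega> i) = \<mu>" for i
    unfolding \<mu>_def by (rule ident)
  show ?thesis
    unfolding lnY K_eq
    by (intro allI impI ballI law.log_partition_concentration[OF adm _ P indep_vars_subset[OF indep subset_UNIV] site_law])
      simp_all
qed

end
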